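(* Let $\mathcal{C}$ be an $(n,k)$ linear code over $\mathrm{GF}(q^m)$ with rank weight distribution $A_0,\dots,A_n$, and let $d_{\mathrm{R}}'$ be the minimum rank distance of $\mathcal{C}^\perp$. If $\nu<d_{\mathrm{R}}'$ (with $0\le\nu\le n$), then $$\sum_{i=0}^{n-\nu}{n-i\brack\nu}A_i=q^{m(k-\nu)}{n\brack\nu}.$$
   Context: $q$ is a prime power. For $\mathbf{x}\in\mathrm{GF}(q^m)^n$, $\mathrm{rk}(\mathbf{x})$ is the dimension over $\mathrm{GF}(q)$ of the $\mathrm{GF}(q)$-span of its coordinates in $\mathrm{GF}(q^m)$; the rank distance is $d(\mathbf{x},\mathbf{y})=\mathrm{rk}(\mathbf{x}-\mathbf{y})$, and the minimum rank distance of a code is the minimum over pairs of distinct codewords. $A_i$ is the number of codewords of $\mathcal{C}$ of rank $i$. An $(n,k)$ linear code is a $k$-dimensional $\mathrm{GF}(q^m)$-subspace of $\mathrm{GF}(q^m)^n$; $\mathcal{C}^\perp=\{\mathbf{u}:\sum_iu_ic_i=0\ \forall\mathbf{c}\in\mathcal{C}\}$. Gaussian binomial: ${a\brack u}=\prod_{i=0}^{u-1}\frac{q^a-q^i}{q^u-q^i}$ for $0\le u\le a$ (equal to $1$ for $u=0$). *)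

theory Defs
  imports "HOL-Analysis.Analysis" "HOL-Computational_Algebra.Primes"
begin

text \<open>The ground field GF(q) inside the finite field 'a = GF(q^m):
  the set of elements fixed by the q-th power map.\<close>
definition subfield_q :: "nat \<Rightarrow> ('a::{field,finite}) set" where
  "subfield_q q = {y. y ^ q = y}"

text \<open>Rank of a vector: dimension over GF(q) of the GF(q)-span of its coordinates,
  i.e. the least number of elements of 'a whose GF(q)-linear combinations
  give all coordinates.\<close>
definition rk :: "nat \<Rightarrow> ('a::{field,finite}) ^ 'n \<Rightarrow> nat" where
  "rk q x = (LEAST r. \<exists>b :: nat \<Rightarrow> 'a. \<forall>i. \<exists>c :: nat \<Rightarrow> 'a.
      (\<forall>j. c j \<in> subfield_q q) \<and> x $ i = (\<Sum>j<r. c j * b j))"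

definition dual_code :: "('a::field ^ 'n) set \<Rightarrow> ('a ^ 'n) set" where
  "dual_code C = {u. \<forall>c\<in>C. (\<Sum>i\<in>UNIV. u $ i * c $ i) = 0}"

definition gauss_binom :: "nat \<Rightarrow> nat \<Rightarrow> nat \<Rightarrow> real" where
  "gauss_binom q a u = (\<Prod>i<u. (real q ^ a - real q ^ i) / (real q ^ u - real q ^ i))"

definition rank_weight_count :: "nat \<Rightarrow> ('a::{field,finite} ^ 'n) set \<Rightarrow> nat \<Rightarrow> nat" where
  "rank_weight_count q C i = card {c \<in> C. rk q c = i}"

end

theory Submission
  imports Defs "HOL-Computational_Algebra.Polynomial" "HOL-Library.Function_Algebras"
begin

(*
  For a codeword c, the vectors a in GF(q)^n with a . c = 0 form a GF(q)-space of dimension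
  n - rk c, so [n - rk c, nu] is its number of ordered independent nu-tuples divided by
  prod_{i<nu} (q^nu - q^i).  Double count the pairs (c, t) of a codeword and an independent
  nu-tuple t of GF(q)^n orthogonal to c: for fixed t, every nonzero GF(q^m)-combination of the
  t_i has rank at most nu < d'_R and so lies outside the dual code; hence c |-> (t_i . c)_i maps
  C onto GF(q^m)^nu, and exactly q^(m (k - nu)) codewords are orthogonal to t.
*)

section \<open>Finite fields\<close>

lemma card_eq_card_image_mult_card_kernel:
  fixes f :: "'b::ab_group_add \<Rightarrow> 'c::ab_group_add"
  assumes "finite A"
    and add: "\<And>a b. a \<in> A \<Longrightarrow> b \<in> A \<Longrightarrow> a + b \<in> A"
    and diff: "\<And>a b. a \<in> A \<Longrightarrow> b \<in> A \<Longrightarrow> a - b \<in> A"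
    and hom: "\<And>a b. a \<in> A \<Longrightarrow> b \<in> A \<Longrightarrow> f (a - b) = f a - f b"
  shows "card A = card (f ` A) * card {a\<in>A. f a = 0}"
proof -
  let ?K = "{a\<in>A. f a = 0}"
  have fiber: "card {a\<in>A. f a = f a0} = card ?K" if "a0 \<in> A" for a0
  proof (rule bij_betw_same_card[of "\<lambda>a. a - a0"])
    have "a + a0 \<in> A \<and> f (a + a0) = f a0" if "a \<in> ?K" for a
      using that hom[of "a + a0" a0] add[of a a0] \<open>a0 \<in> A\<close> by auto
    then show "bij_betw (\<lambda>a. a - a0) {a\<in>A. f a = f a0} ?K"
      using \<open>a0 \<in> A\<close> diff hom by (intro bij_betw_byWitness[of _ "\<lambda>a. a + a0"]) auto
  qed
  have "(\<Sum>y\<in>f ` A. \<Sum>a\<in>{a\<in>A. f a = y}. 1::nat) = (\<Sum>a\<in>A. 1)"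
    by (rule sum.group) (use \<open>finite A\<close> in auto)
  then have "card A = (\<Sum>y\<in>f ` A. card {a\<in>A. f a = y})"
    by simp
  also have "\<dots> = (\<Sum>y\<in>f ` A. card ?K)"
    using fiber by (intro sum.cong) auto
  finally show ?thesis by simp
qed

(* Translation by 1 permutes the ring, so it does not change the sum of all elements. *)
lemma of_nat_CARD_eq_0: "of_nat CARD('a::{ring_1,finite}) = (0::'a)"
proof -
  have "(\<Sum>y\<in>UNIV. y + 1) = (\<Sum>y\<in>UNIV. y :: 'a)"
    by (rule sum.reindex_bij_witness[of _ "\<lambda>y. y - 1" "\<lambda>y. y + 1"]) auto
  then show ?thesis by (simp add: sum.distrib)
qed

lemma CHAR_eq_if_CARD_eq_prime_power:
  assumes "prime p" and "CARD('a::{field,finite}) = p ^ k"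
  shows "CHAR('a) = p"
proof -
  have "prime CHAR('a)"
    by (simp add: finite_imp_CHAR_pos prime_CHAR_semidom)
  moreover have "CHAR('a) dvd CARD('a)"
    using of_nat_CARD_eq_0[where 'a='a] of_nat_eq_0_iff_char_dvd by blast
  ultimately show ?thesis
    using assms by (metis prime_dvd_power primes_dvd_imp_eq)
qed

lemma two_le_CARD: "2 \<le> CARD('a::{zero_neq_one,finite})"
  using card_mono[of UNIV "{0::'a, 1}"] by simp

lemma finite_field_power_CARD [simp]: "(x::'a::{field,finite}) ^ CARD('a) = x"
proof (cases "x = 0")
  case False
  let ?U = "UNIV - {0::'a}"
  have "(\<Prod>y\<in>?U. x * y) = (\<Prod>y\<in>?U. y)"
    by (rule prod.reindex_bij_witness[of _ "\<lambda>y. y / x" "\<lambda>y. x * y"]) (use False in auto)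
  then have "x ^ (CARD('a) - 1) = 1"
    by (simp add: prod.distrib card_Diff_singleton prod_zero_iff)
  then show ?thesis
    by (metis Suc_pred' finite_UNIV_card_ge_0 finite power_Suc mult_1_right)
qed (simp add: finite_UNIV_card_ge_0)

lemma frobenius_diff:
  assumes "prime CHAR('a::field)"
  shows "(x - y :: 'a) ^ (CHAR('a) ^ k) = x ^ (CHAR('a) ^ k) - y ^ (CHAR('a) ^ k)"
  using freshmans_dream'[OF assms refl, of "x - y" y] by simp

lemma degree_sum_monom_powers:
  assumes "q \<ge> 2" and "m > 0"
  shows "degree (\<Sum>j<m. monom (1::'a::field) (q ^ j)) = q ^ (m - 1)"
  using assms(2)
proof (induction m)
  case (Suc m)
  show ?case
  proof (cases "m = 0")
    case False
    have "q ^ (m - 1) < q ^ m"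
      using False assms(1) by (intro power_strict_increasing) auto
    then show ?thesis
      using Suc False by (simp add: degree_add_eq_right degree_monom_eq)
  qed (simp add: degree_monom_eq)
qed simp

locale subfield =
  fixes F :: "'a::field set"
  assumes zero_mem: "0 \<in> F" and one_mem: "1 \<in> F"
    and add_mem: "a \<in> F \<Longrightarrow> b \<in> F \<Longrightarrow> a + b \<in> F"
    and mult_mem: "a \<in> F \<Longrightarrow> b \<in> F \<Longrightarrow> a * b \<in> F"
    and uminus_mem: "a \<in> F \<Longrightarrow> - a \<in> F"
    and inverse_mem: "a \<in> F \<Longrightarrow> inverse a \<in> F"
begin

lemma diff_mem: "a \<in> F \<Longrightarrow> b \<in> F \<Longrightarrow> a - b \<in> F"
  using add_mem[of a "- b"] uminus_mem[of b] by simp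

lemma sum_mem: "(\<And>i. i \<in> I \<Longrightarrow> f i \<in> F) \<Longrightarrow> sum f I \<in> F"
  by (induction I rule: infinite_finite_induct) (auto intro: zero_mem add_mem)

lemma two_le_card: "finite F \<Longrightarrow> 2 \<le> card F"
  using card_mono[of F "{0, 1}"] zero_mem one_mem by auto

end

lemma subfield_subfield_q:
  assumes "prime CHAR('a::{field,finite})" and "q = CHAR('a) ^ e"
  shows "subfield (subfield_q q :: 'a set)"
proof
  have "q > 0"
    using assms by (simp add: prime_gt_0_nat)
  have frob: "(a + b) ^ q = a ^ q + b ^ q" "(a - b) ^ q = a ^ q - b ^ q" for a b :: 'a
    using freshmans_dream'[OF assms(1)] frobenius_diff[OF assms(1)] assms(2) by auto
  fix a b :: 'a
  show "0 \<in> subfield_q q" "1 \<in> subfield_q q"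
    using \<open>q > 0\<close> by (auto simp: subfield_q_def)
  show "a \<in> subfield_q q \<Longrightarrow> b \<in> subfield_q q \<Longrightarrow> a + b \<in> subfield_q q"
    "a \<in> subfield_q q \<Longrightarrow> b \<in> subfield_q q \<Longrightarrow> a * b \<in> subfield_q q"
    "a \<in> subfield_q q \<Longrightarrow> inverse a \<in> subfield_q q"
    by (simp_all add: subfield_q_def frob power_mult_distrib power_inverse)
  show "a \<in> subfield_q q \<Longrightarrow> - a \<in> subfield_q q"
    using frob(2)[of 0 a] \<open>q > 0\<close> by (simp add: subfield_q_def)
qed

lemma card_subfield_q_le:
  assumes "2 \<le> q"
  shows "card (subfield_q q :: 'a::{field,finite} set) \<le> q"
proof -
  let ?P = "monom (1::'a) q - [:0, 1:]"
  have "degree ?P = q"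
    using assms by (simp only: diff_conv_add_uminus, subst degree_add_eq_left) (auto simp: degree_monom_eq)
  moreover have "subfield_q q = {x. poly ?P x = 0}"
    by (simp add: subfield_q_def poly_monom)
  ultimately show ?thesis
    using card_poly_roots_bound[of ?P] assms by (cases "?P = 0") auto
qed

(* Each x^q - x is a root of the sum over j < m of y^(q^j), which telescopes to x^(q^m) - x = 0. *)
lemma card_range_power_minus_le:
  assumes "prime CHAR('a::{field,finite})" and "q = CHAR('a) ^ e" and "CARD('a) = q ^ m"
    and "2 \<le> q" and "m > 0"
  shows "card (range (\<lambda>x::'a. x ^ q - x)) \<le> q ^ (m - 1)"
proof -
  have frob: "(x - y) ^ (q ^ j) = x ^ (q ^ j) - y ^ (q ^ j)" for x y :: 'a and j
    using frobenius_diff[OF assms(1), of x y "e * j"] assms(2) by (simp add: power_mult)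
  define P where "P = (\<Sum>j<m. monom (1::'a) (q ^ j))"
  have "poly P (x ^ q - x) = 0" for x
  proof -
    have "poly P (x ^ q - x) = (\<Sum>j<m. x ^ q ^ Suc j - x ^ q ^ j)"
      by (simp add: P_def poly_sum poly_monom frob power_mult[symmetric] mult.commute)
    also have "\<dots> = x ^ q ^ m - x ^ q ^ 0"
      by (rule sum_lessThan_telescope)
    also have "\<dots> = 0"
      by (simp flip: assms(3))
    finally show ?thesis .
  qed
  then have "card (range (\<lambda>x::'a. x ^ q - x)) \<le> card {y. poly P y = 0}"
    by (intro card_mono) auto
  also have "\<dots> \<le> q ^ (m - 1)"
  proof -
    have "degree P = q ^ (m - 1)"
      unfolding P_def using assms(4,5) by (rule degree_sum_monom_powers)
    then show ?thesis
      using card_poly_roots_bound[of P] assms(4) by (cases "P = 0") auto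
  qed
  finally show ?thesis .
qed

lemma CARD_eq_powerD:
  assumes "CARD('a::{zero_neq_one,finite}) = q ^ m"
  shows "2 \<le> q" and "m > 0"
proof -
  show "m > 0"
    using two_le_CARD[where 'a='a] assms by (cases m) auto
  show "2 \<le> q"
  proof (rule ccontr)
    assume "\<not> 2 \<le> q"
    then have "q ^ m \<le> 1"
      by (intro power_le_one) auto
    with two_le_CARD[where 'a='a] assms show False
      by simp
  qed
qed

lemma card_subfield_q:
  assumes char: "prime CHAR('a::{field,finite})" and q: "q = CHAR('a) ^ e" and card: "CARD('a) = q ^ m"
  shows "card (subfield_q q :: 'a set) = q"
proof -
  note q2 = CARD_eq_powerD(1)[OF card] and m = CARD_eq_powerD(2)[OF card]
  have "(a - b) ^ q - (a - b) = (a ^ q - a) - (b ^ q - b)" for a b :: 'a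
    using frobenius_diff[OF char, of a b e] q by simp
  then have "q ^ m = card (range (\<lambda>x::'a. x ^ q - x)) * card (subfield_q q :: 'a set)"
    using card_eq_card_image_mult_card_kernel[of UNIV "\<lambda>x::'a. x ^ q - x"] card
    by (simp add: subfield_q_def)
  also have "\<dots> \<le> q ^ (m - 1) * card (subfield_q q :: 'a set)"
    using card_range_power_minus_le[OF char q card q2 m] by simp
  finally have "q \<le> card (subfield_q q :: 'a set)"
    using m q2 by (cases m) auto
  with card_subfield_q_le[OF q2, where 'a='a] show ?thesis
    by simp
qed

section \<open>Linear algebra over a finite subfield\<close>

(* F-linear notions in a module over the whole scalar field.  A tuple (t 0, ..., t (j - 1))
   is a function on nat of which only the first j values matter. *)
locale subfield_module = module scale + subfield F
  for scale :: "'a::field \<Rightarrow> 'b::ab_group_add \<Rightarrow> 'b" and F :: "'a set" +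
  assumes finite_F: "finite F"
begin

definition lincomb :: "(nat \<Rightarrow> 'a) \<Rightarrow> (nat \<Rightarrow> 'b) \<Rightarrow> nat \<Rightarrow> 'b" where
  "lincomb c t j = (\<Sum>i<j. scale (c i) (t i))"

definition Fspan :: "(nat \<Rightarrow> 'b) \<Rightarrow> nat \<Rightarrow> 'b set" where
  "Fspan t j = {lincomb c t j | c. \<forall>i<j. c i \<in> F}"

definition Findependent :: "(nat \<Rightarrow> 'b) \<Rightarrow> nat \<Rightarrow> bool" where
  "Findependent t j \<longleftrightarrow> (\<forall>c. (\<forall>i<j. c i \<in> F) \<longrightarrow> lincomb c t j = 0 \<longrightarrow> (\<forall>i<j. c i = 0))"

definition Fsubspace :: "'b set \<Rightarrow> bool" where
  "Fsubspace S \<longleftrightarrow> 0 \<in> S \<and> (\<forall>x\<in>S. \<forall>y\<in>S. x + y \<in> S) \<and> (\<forall>a\<in>F. \<forall>x\<in>S. scale a x \<in> S)"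

definition independent_tuples :: "'b set \<Rightarrow> nat \<Rightarrow> (nat \<Rightarrow> 'b) set" where
  "independent_tuples S j = {t \<in> {..<j} \<rightarrow>\<^sub>E S. Findependent t j}"

lemma lincomb_cong:
  "(\<And>i. i < j \<Longrightarrow> c i = c' i) \<Longrightarrow> (\<And>i. i < j \<Longrightarrow> t i = t' i) \<Longrightarrow> lincomb c t j = lincomb c' t' j"
  unfolding lincomb_def by (intro sum.cong) auto

lemma lincomb_0 [simp]: "lincomb c t 0 = 0"
  by (simp add: lincomb_def)

lemma lincomb_Suc: "lincomb c t (Suc j) = lincomb c t j + scale (c j) (t j)"
  by (simp add: lincomb_def)

lemma lincomb_add: "lincomb (\<lambda>i. c i + d i) t j = lincomb c t j + lincomb d t j"
  by (simp add: lincomb_def scale_left_distrib sum.distrib)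

lemma lincomb_diff: "lincomb (\<lambda>i. c i - d i) t j = lincomb c t j - lincomb d t j"
  by (simp add: lincomb_def scale_left_diff_distrib sum_subtractf)

lemma scale_lincomb: "scale a (lincomb c t j) = lincomb (\<lambda>i. a * c i) t j"
  by (simp add: lincomb_def scale_sum_right)

lemma lincomb_upd_Suc: "lincomb (c(j := a)) (t(j := x)) (Suc j) = lincomb c t j + scale a x"
  by (simp add: lincomb_Suc lincomb_cong[of j "c(j := a)" c "t(j := x)" t])

lemma mem_FspanI: "(\<forall>i<j. c i \<in> F) \<Longrightarrow> lincomb c t j \<in> Fspan t j"
  unfolding Fspan_def by blast

lemma FindependentD: "Findependent t j \<Longrightarrow> \<forall>i<j. c i \<in> F \<Longrightarrow> lincomb c t j = 0 \<Longrightarrow> i < j \<Longrightarrow> c i = 0"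
  unfolding Findependent_def by blast

lemma Fspan_eq_image: "Fspan t j = (\<lambda>c. lincomb c t j) ` ({..<j} \<rightarrow>\<^sub>E F)"
proof (intro equalityI subsetI)
  fix x assume "x \<in> Fspan t j"
  then obtain c where c: "\<forall>i<j. c i \<in> F" "x = lincomb c t j"
    by (auto simp: Fspan_def)
  then have "x = lincomb (restrict c {..<j}) t j"
    by (auto intro: lincomb_cong)
  moreover have "restrict c {..<j} \<in> {..<j} \<rightarrow>\<^sub>E F"
    using c by auto
  ultimately show "x \<in> (\<lambda>c. lincomb c t j) ` ({..<j} \<rightarrow>\<^sub>E F)"
    by blast
qed (auto simp: Fspan_def PiE_iff)

lemma finite_Fspan [simp]: "finite (Fspan t j)"
  unfolding Fspan_eq_image using finite_F by (auto intro: finite_PiE)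

lemma card_Fspan_le: "card (Fspan t j) \<le> card F ^ j"
  unfolding Fspan_eq_image using finite_F card_image_le[of "{..<j} \<rightarrow>\<^sub>E F"]
  by (simp add: card_PiE finite_PiE)

lemma card_Fspan:
  assumes "Findependent t j"
  shows "card (Fspan t j) = card F ^ j"
proof -
  have "inj_on (\<lambda>c. lincomb c t j) ({..<j} \<rightarrow>\<^sub>E F)"
  proof (rule inj_onI)
    fix c d assume c: "c \<in> {..<j} \<rightarrow>\<^sub>E F" and d: "d \<in> {..<j} \<rightarrow>\<^sub>E F"
      and "lincomb c t j = lincomb d t j"
    then have "lincomb (\<lambda>i. c i - d i) t j = 0"
      by (simp add: lincomb_diff)
    moreover have "\<forall>i<j. c i - d i \<in> F"
      using c d by (auto intro: diff_mem)
    ultimately have "\<forall>i<j. c i = d i"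
      using FindependentD[OF assms] by fastforce
    then show "c = d"
      using c d by (intro PiE_ext) auto
  qed
  then show ?thesis
    unfolding Fspan_eq_image using finite_F by (simp add: card_image card_PiE)
qed

lemma Fsubspace_lincomb:
  assumes "Fsubspace S" "\<forall>i<j. t i \<in> S" "\<forall>i<j. c i \<in> F"
  shows "lincomb c t j \<in> S"
  using assms by (induction j) (auto simp: Fsubspace_def lincomb_Suc)

lemma Fspan_subset: "Fsubspace S \<Longrightarrow> \<forall>i<j. t i \<in> S \<Longrightarrow> Fspan t j \<subseteq> S"
  by (auto simp: Fspan_def intro: Fsubspace_lincomb)

lemma Fsubspace_Fspan: "Fsubspace (Fspan t j)"
  unfolding Fsubspace_def
proof (intro conjI ballI)
  show "0 \<in> Fspan t j"
    using mem_FspanI[of j "\<lambda>_. 0" t] zero_mem by (simp add: lincomb_def)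
  show "x + y \<in> Fspan t j" if x: "x \<in> Fspan t j" and y: "y \<in> Fspan t j" for x y
  proof -
    obtain c d where "\<forall>i<j. c i \<in> F" "x = lincomb c t j" "\<forall>i<j. d i \<in> F" "y = lincomb d t j"
      using x y unfolding Fspan_def by blast
    then show ?thesis
      using mem_FspanI[of j "\<lambda>i. c i + d i" t] by (simp add: lincomb_add add_mem)
  qed
  show "scale a x \<in> Fspan t j" if "a \<in> F" and x: "x \<in> Fspan t j" for a x
  proof -
    obtain c where "\<forall>i<j. c i \<in> F" "x = lincomb c t j"
      using x unfolding Fspan_def by blast
    then show ?thesis
      using mem_FspanI[of j "\<lambda>i. a * c i" t] \<open>a \<in> F\<close> by (simp add: scale_lincomb mult_mem)
  qed
qed

lemma Fsubspace_sum:
  "Fsubspace S \<Longrightarrow> (\<And>i. i \<in> I \<Longrightarrow> f i \<in> S) \<Longrightarrow> sum f I \<in> S"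
  by (induction I rule: infinite_finite_induct) (auto simp: Fsubspace_def)

lemma Findependent_updD:
  assumes indep: "Findependent (t(j := x)) (Suc j)"
  shows "Findependent t j" and "x \<notin> Fspan t j"
proof -
  show "Findependent t j"
    unfolding Findependent_def
  proof (intro allI impI)
    fix c i assume "\<forall>i<j. c i \<in> F" "lincomb c t j = 0" "i < j"
    then show "c i = 0"
      using FindependentD[OF indep, of "c(j := 0)" i] zero_mem
      by (simp add: lincomb_upd_Suc less_Suc_eq)
  qed
  show "x \<notin> Fspan t j"
  proof
    assume "x \<in> Fspan t j"
    then obtain c where "\<forall>i<j. c i \<in> F" "x = lincomb c t j"
      by (auto simp: Fspan_def)
    then show False
      using FindependentD[OF indep, of "c(j := -1)" j] one_mem uminus_mem
      by (simp add: lincomb_upd_Suc less_Suc_eq)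
  qed
qed

lemma Findependent_updI:
  assumes indep: "Findependent t j" and x: "x \<notin> Fspan t j"
  shows "Findependent (t(j := x)) (Suc j)"
  unfolding Findependent_def
proof (intro allI impI)
  fix c i assume c: "\<forall>i<Suc j. c i \<in> F" and "lincomb c (t(j := x)) (Suc j) = 0"
    and i: "i < Suc j"
  then have zero: "lincomb c t j + scale (c j) x = 0"
    using lincomb_upd_Suc[of c j "c j" t x] by simp
  have "c j = 0"
  proof (rule ccontr)
    assume "c j \<noteq> 0"
    then have "x = scale (inverse (c j)) (scale (c j) x)"
      by simp
    also have "\<dots> = scale (- inverse (c j)) (lincomb c t j)"
      using zero by (simp add: eq_neg_iff_add_eq_0[symmetric] add.commute)
    finally have "x = lincomb (\<lambda>i. - inverse (c j) * c i) t j"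
      by (simp only: scale_lincomb)
    moreover have "\<forall>i<j. - inverse (c j) * c i \<in> F"
      using c by (intro allI impI mult_mem uminus_mem inverse_mem) auto
    ultimately show False
      using x mem_FspanI by metis
  qed
  then show "c i = 0"
    using zero c i FindependentD[OF indep, of c i] by (auto simp: less_Suc_eq)
qed

lemma Findependent_upd_iff:
  "Findependent (t(j := x)) (Suc j) \<longleftrightarrow> Findependent t j \<and> x \<notin> Fspan t j"
  using Findependent_updD Findependent_updI by blast

lemma Fbasis_exists:
  assumes "Fsubspace S" "finite S"
  obtains t j where "\<forall>i<j. t i \<in> S" "Findependent t j" "Fspan t j = S"
proof -
  define P where "P j \<longleftrightarrow> (\<exists>t. (\<forall>i<j. t i \<in> S) \<and> Findependent t j)" for j
  have bound: "j \<le> card S" if Pj: "P j" for j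
  proof -
    obtain t where t: "\<forall>i<j. t i \<in> S" "Findependent t j"
      using Pj unfolding P_def by blast
    have "j < 2 ^ j"
      by (rule less_exp)
    also have "\<dots> \<le> card F ^ j"
      using two_le_card[OF finite_F] by (rule power_mono) simp
    also have "\<dots> = card (Fspan t j)"
      using card_Fspan[OF t(2)] by simp
    also have "\<dots> \<le> card S"
      using Fspan_subset[OF assms(1) t(1)] assms(2) by (rule card_mono[rotated])
    finally show ?thesis
      by simp
  qed
  define j where "j = (GREATEST j. P j)"
  have "P 0"
    by (simp add: P_def Findependent_def)
  then have "P j"
    unfolding j_def using bound by (rule GreatestI_nat)
  then obtain t where t: "\<forall>i<j. t i \<in> S" "Findependent t j"
    by (auto simp: P_def)
  have "Fspan t j = S"
  proof (rule ccontr)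
    assume "Fspan t j \<noteq> S"
    then obtain x where "x \<in> S" "x \<notin> Fspan t j"
      using Fspan_subset[OF assms(1) t(1)] by blast
    then have "P (Suc j)"
      unfolding P_def using t Findependent_upd_iff[of t j x]
      by (intro exI[of _ "t(j := x)"]) (auto simp: less_Suc_eq)
    then have "Suc j \<le> j"
      unfolding j_def using bound by (rule Greatest_le_nat)
    then show False
      by simp
  qed
  with t show ?thesis
    by (rule that)
qed

lemma independent_tuples_Suc:
  "independent_tuples S (Suc j) =
     (\<lambda>(t, x). t(j := x)) ` (SIGMA t:independent_tuples S j. S - Fspan t j)"
proof (intro equalityI subsetI)
  fix s assume s: "s \<in> independent_tuples S (Suc j)"
  let ?t = "s(j := undefined)"
  have "Findependent ?t j" "s j \<notin> Fspan ?t j"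
    using s Findependent_upd_iff[of ?t j "s j"] by (auto simp: independent_tuples_def)
  moreover have "?t \<in> {..<j} \<rightarrow>\<^sub>E S" "s j \<in> S"
    using s by (auto simp: independent_tuples_def PiE_iff extensional_def)
  ultimately show "s \<in> (\<lambda>(t, x). t(j := x)) ` (SIGMA t:independent_tuples S j. S - Fspan t j)"
    by (intro image_eqI[of _ _ "(?t, s j)"]) (auto simp: independent_tuples_def)
next
  fix s assume "s \<in> (\<lambda>(t, x). t(j := x)) ` (SIGMA t:independent_tuples S j. S - Fspan t j)"
  then obtain t x where "t \<in> independent_tuples S j" "x \<in> S" "x \<notin> Fspan t j" "s = t(j := x)"
    by auto
  then show "s \<in> independent_tuples S (Suc j)"
    by (auto simp: independent_tuples_def PiE_iff extensional_def Findependent_upd_iff)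
qed

lemma inj_on_upd_independent_tuples:
  "inj_on (\<lambda>(t, x). t(j := x)) (SIGMA t:independent_tuples S j. A t)"
proof (rule inj_onI)
  fix a b assume "a \<in> (SIGMA t:independent_tuples S j. A t)" "b \<in> (SIGMA t:independent_tuples S j. A t)"
    and eq: "(\<lambda>(t, x). t(j := x)) a = (\<lambda>(t, x). t(j := x)) b"
  then obtain t x t' x' where ab: "a = (t, x)" "b = (t', x')"
    and "t \<in> independent_tuples S j" "t' \<in> independent_tuples S j"
    by auto
  then have tj: "t j = t' j"
    using PiE_arb[of t "{..<j}" "\<lambda>_. S" j] PiE_arb[of t' "{..<j}" "\<lambda>_. S" j]
    by (simp add: independent_tuples_def)
  have upd: "t(j := x) = t'(j := x')"
    using eq ab by simp
  have "t i = t' i" for i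
  proof (cases "i = j")
    case False
    then show ?thesis
      using fun_cong[OF upd, of i] by simp
  qed (use tj in simp)
  moreover have "x = x'"
    using fun_cong[OF upd, of j] by simp
  ultimately show "a = b"
    using ab by auto
qed

lemma finite_independent_tuples: "finite S \<Longrightarrow> finite (independent_tuples S j)"
  unfolding independent_tuples_def
  by (rule finite_subset[of _ "{..<j} \<rightarrow>\<^sub>E S"]) (simp_all add: finite_PiE)

lemma card_independent_tuples:
  assumes S: "Fsubspace S" "finite S" and card_S: "card S = card F ^ d"
  shows "real (card (independent_tuples S j)) = (\<Prod>i<j. real (card F) ^ d - real (card F) ^ i)"
proof (induction j)
  case 0
  have "independent_tuples S 0 = {\<lambda>_. undefined}"
    by (auto simp: independent_tuples_def Findependent_def)
  then show ?case
    by simp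
next
  case (Suc j)
  let ?T = "independent_tuples S j"
  have "finite ?T"
    using S(2) by (rule finite_independent_tuples)
  then have "real (card (independent_tuples S (Suc j))) = (\<Sum>t\<in>?T. real (card (S - Fspan t j)))"
    using S(2) by (simp add: independent_tuples_Suc card_image inj_on_upd_independent_tuples)
  also have "\<dots> = (\<Sum>t\<in>?T. real (card F) ^ d - real (card F) ^ j)"
  proof (rule sum.cong[OF refl])
    fix t assume "t \<in> ?T"
    then have sub: "Fspan t j \<subseteq> S" and indep: "Findependent t j"
      using Fspan_subset[OF S(1)] by (auto simp: independent_tuples_def PiE_iff)
    then have "card (Fspan t j) \<le> card S"
      using S(2) by (intro card_mono)
    then show "real (card (S - Fspan t j)) = real (card F) ^ d - real (card F) ^ j"
      using sub S(2) card_S card_Fspan[OF indep] by (simp add: card_Diff_subset of_nat_diff)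
  qed
  finally show ?case
    using Suc.IH by simp
qed

lemma gauss_binom_eq_card_independent_tuples:
  assumes "Fsubspace S" "finite S" "card S = card F ^ d"
  shows "gauss_binom (card F) d j
    = real (card (independent_tuples S j)) / (\<Prod>i<j. real (card F) ^ j - real (card F) ^ i)"
  by (simp add: gauss_binom_def card_independent_tuples[OF assms] prod_dividef)

end

section \<open>Vector spaces over a finite field\<close>

lemma (in module) card_span_independent:
  assumes "finite (UNIV :: 'a set)" and "finite B" and "independent B"
  shows "card (span B) = CARD('a) ^ card B"
proof -
  let ?comb = "\<lambda>u. \<Sum>v\<in>B. scale (u v) v"
  have "span B = ?comb ` (B \<rightarrow>\<^sub>E UNIV)"
    unfolding span_finite[OF assms(2)]
  proof (intro equalityI subsetI)
    fix x assume "x \<in> range ?comb"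
    then obtain u where "x = ?comb u"
      by blast
    also have "?comb u = ?comb (restrict u B)"
      by (intro sum.cong) auto
    finally show "x \<in> ?comb ` (B \<rightarrow>\<^sub>E UNIV)"
      by (rule image_eqI[where x = "restrict u B"]) simp
  qed blast
  moreover have "inj_on ?comb (B \<rightarrow>\<^sub>E UNIV)"
  proof (rule inj_onI)
    fix u w assume u: "u \<in> B \<rightarrow>\<^sub>E UNIV" and w: "w \<in> B \<rightarrow>\<^sub>E UNIV" and "?comb u = ?comb w"
    then have "(\<Sum>v\<in>B. scale (u v - w v) v) = 0"
      by (simp add: scale_left_diff_distrib sum_subtractf)
    then have "u v = w v" if "v \<in> B" for v
      using independentD[OF assms(3) assms(2) subset_refl, of "\<lambda>v. u v - w v"] that by simp
    then show "u = w"
      using u w by (intro PiE_ext) auto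
  qed
  ultimately show ?thesis
    using assms(2) by (simp add: card_image card_funcsetE)
qed

lemma (in finite_dimensional_vector_space) card_subspace:
  assumes "finite (UNIV :: 'a set)" and "subspace S"
  shows "card S = CARD('a) ^ dim S"
proof -
  obtain B where B: "B \<subseteq> S" "independent B" "S \<subseteq> span B" "card B = dim S"
    by (rule basis_exists)
  then have "span B = S"
    using span_subspace assms(2) by blast
  then show ?thesis
    using card_span_independent[OF assms(1) finiteI_independent B(2)] B by simp
qed

(* nu-tuples encoded as functions on nat vanishing from nu on, so that they form a vector space *)
definition tuples :: "nat \<Rightarrow> (nat \<Rightarrow> 'a::zero) set" where
  "tuples \<nu> = {g. \<forall>i\<ge>\<nu>. g i = 0}"

lemma card_tuples: "card (tuples \<nu> :: (nat \<Rightarrow> 'a::{zero,finite}) set) = CARD('a) ^ \<nu>"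
proof -
  let ?T = "tuples \<nu> :: (nat \<Rightarrow> 'a) set"
  let ?r = "\<lambda>g :: nat \<Rightarrow> 'a. restrict g {..<\<nu>}"
  have inj: "inj_on ?r ?T"
  proof (rule inj_onI)
    fix g g' assume g: "g \<in> ?T" "g' \<in> ?T" and eq: "?r g = ?r g'"
    show "g = g'"
    proof
      fix i show "g i = g' i"
        using fun_cong[OF eq, of i] g by (simp add: tuples_def split: if_splits)
    qed
  qed
  have "?r ` ?T = {..<\<nu>} \<rightarrow>\<^sub>E UNIV"
  proof (intro equalityI subsetI)
    fix h :: "nat \<Rightarrow> 'a" assume h: "h \<in> {..<\<nu>} \<rightarrow>\<^sub>E UNIV"
    let ?g = "\<lambda>i. if i < \<nu> then h i else 0"
    have "?r ?g = h"
    proof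
      fix i show "?r ?g i = h i"
        using PiE_arb[OF h, of i] by simp
    qed
    moreover have "?g \<in> ?T"
      by (simp add: tuples_def)
    ultimately show "h \<in> ?r ` ?T"
      by (rule image_eqI[OF sym])
  next
    fix h assume "h \<in> ?r ` ?T"
    then obtain g where "h = ?r g"
      by blast
    then show "h \<in> {..<\<nu>} \<rightarrow>\<^sub>E UNIV"
      by simp
  qed
  then have "card ?T = card ({..<\<nu>} \<rightarrow>\<^sub>E (UNIV :: 'a set))"
    using card_image[OF inj] by simp
  then show ?thesis
    by (simp add: card_funcsetE)
qed

lemma finite_tuples [simp]: "finite (tuples \<nu> :: (nat \<Rightarrow> 'a::{zero,finite}) set)"
  using card_tuples[of \<nu>, where 'a='a] by (intro card_ge_0_finite) simp

lemma exists_annihilator_of_small_set: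
  fixes B :: "(nat \<Rightarrow> 'a::{field,finite}) set"
  assumes "finite B" and "card B < \<nu>"
  obtains \<alpha> where "\<alpha> \<in> tuples \<nu>" "\<alpha> \<noteq> 0" "\<And>b. b \<in> B \<Longrightarrow> (\<Sum>i<\<nu>. \<alpha> i * b i) = 0"
proof -
  define h where "h \<alpha> = restrict (\<lambda>b. \<Sum>i<\<nu>. \<alpha> i * b i) B" for \<alpha> :: "nat \<Rightarrow> 'a"
  have "\<not> inj_on h (tuples \<nu>)"
  proof
    assume "inj_on h (tuples \<nu>)"
    moreover have "h ` tuples \<nu> \<subseteq> B \<rightarrow>\<^sub>E UNIV"
      by (auto simp: h_def)
    moreover have "finite (B \<rightarrow>\<^sub>E (UNIV :: 'a set))"
      by (simp add: finite_PiE \<open>finite B\<close>)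
    ultimately have "card (tuples \<nu> :: (nat \<Rightarrow> 'a) set) \<le> card (B \<rightarrow>\<^sub>E (UNIV :: 'a set))"
      by (rule card_inj_on_le)
    then have "CARD('a) ^ \<nu> \<le> CARD('a) ^ card B"
      using \<open>finite B\<close> by (simp add: card_tuples card_funcsetE)
    with \<open>card B < \<nu>\<close> show False
      using two_le_CARD[where 'a='a] by simp
  qed
  then obtain \<alpha>1 \<alpha>2 where \<alpha>: "\<alpha>1 \<in> tuples \<nu>" "\<alpha>2 \<in> tuples \<nu>" "h \<alpha>1 = h \<alpha>2" "\<alpha>1 \<noteq> \<alpha>2"
    unfolding inj_on_def by blast
  show ?thesis
  proof (rule that[of "\<alpha>1 - \<alpha>2"])
    show "\<alpha>1 - \<alpha>2 \<in> tuples \<nu>" "\<alpha>1 - \<alpha>2 \<noteq> 0"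
      using \<alpha> by (simp_all add: tuples_def)
    fix b assume "b \<in> B"
    then have "(\<Sum>i<\<nu>. \<alpha>1 i * b i) = (\<Sum>i<\<nu>. \<alpha>2 i * b i)"
      using fun_cong[OF \<alpha>(3), of b] by (simp add: h_def)
    then show "(\<Sum>i<\<nu>. (\<alpha>1 - \<alpha>2) i * b i) = 0"
      by (simp add: left_diff_distrib sum_subtractf)
  qed
qed

lemma exists_annihilator_of_proper_subspace:
  fixes I :: "(nat \<Rightarrow> 'a::{field,finite}) set"
  assumes I: "I \<subseteq> tuples \<nu>" "I \<noteq> tuples \<nu>"
    and zero: "0 \<in> I" and add: "\<And>x y. x \<in> I \<Longrightarrow> y \<in> I \<Longrightarrow> x + y \<in> I"
    and scale: "\<And>a x. x \<in> I \<Longrightarrow> (\<lambda>i. a * x i) \<in> I"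
  obtains \<alpha> where "\<alpha> \<in> tuples \<nu>" "\<alpha> \<noteq> 0" "\<And>y. y \<in> I \<Longrightarrow> (\<Sum>i<\<nu>. \<alpha> i * y i) = 0"
proof -
  interpret pointwise: vector_space "\<lambda>(a::'a) (f :: nat \<Rightarrow> 'a) i. a * f i"
    by unfold_locales (auto simp: fun_eq_iff algebra_simps)
  obtain B where B: "B \<subseteq> I" "pointwise.independent B" "I \<subseteq> pointwise.span B"
    by (rule pointwise.basis_exists)
  have "B \<subseteq> tuples \<nu>"
    using B(1) I(1) by (rule order_trans)
  then have "finite B"
    by (rule finite_subset) simp
  have span: "pointwise.span B = I"
    using B zero add scale by (intro pointwise.span_subspace) (auto simp: pointwise.subspace_def)
  have "CARD('a) ^ card B = card (pointwise.span B)"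
    by (rule pointwise.card_span_independent[symmetric]) (simp_all add: \<open>finite B\<close> B(2))
  also have "\<dots> < card (tuples \<nu> :: (nat \<Rightarrow> 'a) set)"
    unfolding span using I by (intro psubset_card_mono) auto
  finally have "card B < \<nu>"
    using two_le_CARD[where 'a='a] by (simp add: card_tuples)
  then obtain \<alpha> where \<alpha>: "\<alpha> \<in> tuples \<nu>" "\<alpha> \<noteq> 0" "\<And>b. b \<in> B \<Longrightarrow> (\<Sum>i<\<nu>. \<alpha> i * b i) = 0"
    using exists_annihilator_of_small_set[OF \<open>finite B\<close>] by blast
  have "pointwise.subspace {y. (\<Sum>i<\<nu>. \<alpha> i * y i) = 0}"
    unfolding pointwise.subspace_def
  proof (intro conjI ballI allI)
    fix x y assume "x \<in> {y. (\<Sum>i<\<nu>. \<alpha> i * y i) = 0}" "y \<in> {y. (\<Sum>i<\<nu>. \<alpha> i * y i) = 0}"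
    then show "x + y \<in> {y. (\<Sum>i<\<nu>. \<alpha> i * y i) = 0}"
      by (simp add: distrib_left sum.distrib)
  next
    fix c x assume "x \<in> {y. (\<Sum>i<\<nu>. \<alpha> i * y i) = 0}"
    then show "(\<lambda>i. c * x i) \<in> {y. (\<Sum>i<\<nu>. \<alpha> i * y i) = 0}"
      by (simp add: mult.left_commute[of _ c] flip: sum_distrib_left)
  qed simp
  moreover have "B \<subseteq> {y. (\<Sum>i<\<nu>. \<alpha> i * y i) = 0}"
    using \<alpha>(3) by blast
  ultimately have "I \<subseteq> {y. (\<Sum>i<\<nu>. \<alpha> i * y i) = 0}"
    unfolding span[symmetric] by (intro pointwise.span_minimal)
  then show ?thesis
    by (intro that[OF \<alpha>(1,2)]) blast
qed

section \<open>Vectors over a subfield\<close>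

definition dot :: "'a::comm_ring ^ 'n \<Rightarrow> 'a ^ 'n \<Rightarrow> 'a" where
  "dot a x = (\<Sum>l\<in>UNIV. a $ l * x $ l)"

lemma dot_add_left: "dot (a + b) x = dot a x + dot b x"
  by (simp add: dot_def distrib_right sum.distrib)

lemma dot_diff_left: "dot (a - b) x = dot a x - dot b x"
  by (simp add: dot_def left_diff_distrib sum_subtractf)

lemma dot_scale_left: "dot (c *s a) x = c * dot a x"
  by (simp add: dot_def sum_distrib_left mult.assoc)

lemma dot_add_right: "dot a (x + y) = dot a x + dot a y"
  by (simp add: dot_def distrib_left sum.distrib)

lemma dot_diff_right: "dot a (x - y) = dot a x - dot a y"
  by (simp add: dot_def right_diff_distrib sum_subtractf)

lemma dot_scale_right: "dot a (c *s x) = c * dot a x"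
  by (simp add: dot_def sum_distrib_left mult.left_commute)

lemma dot_zero_left [simp]: "dot 0 x = 0"
  by (simp add: dot_def)

lemma dot_zero_right [simp]: "dot a 0 = 0"
  by (simp add: dot_def)

lemma dot_sum_left: "dot (\<Sum>i\<in>I. f i) x = (\<Sum>i\<in>I. dot (f i) x)"
  by (induction I rule: infinite_finite_induct) (simp_all add: dot_add_left)

lemma dot_axis_left: "dot (axis l 1) x = (x :: 'a::comm_ring_1 ^ 'n) $ l"
  by (simp add: dot_def axis_def if_distrib[of "\<lambda>a. a * _"] cong: if_cong)

definition vecs_over :: "'a set \<Rightarrow> ('a ^ 'n) set" where
  "vecs_over F = {a. \<forall>l. a $ l \<in> F}"

lemma card_vecs_over:
  assumes "finite F"
  shows "card (vecs_over F :: ('a ^ 'n) set) = card F ^ CARD('n)"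
proof -
  have "bij_betw vec_nth (vecs_over F :: ('a ^ 'n) set) (UNIV \<rightarrow>\<^sub>E F)"
    by (rule bij_betw_byWitness[of _ vec_lambda]) (auto simp: vecs_over_def fun_eq_iff)
  then have "card (vecs_over F :: ('a ^ 'n) set) = card (UNIV \<rightarrow>\<^sub>E F :: ('n \<Rightarrow> 'a) set)"
    by (rule bij_betw_same_card)
  then show ?thesis
    by (simp add: card_funcsetE)
qed

(* The F-span of the coordinates of x, whose dimension is the rank of x. *)
definition coord_span :: "'a::comm_ring set \<Rightarrow> 'a ^ 'n \<Rightarrow> 'a set" where
  "coord_span F x = (\<lambda>a. dot a x) ` vecs_over F"

definition annihilator :: "'a::comm_ring set \<Rightarrow> 'a ^ 'n \<Rightarrow> ('a ^ 'n) set" where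
  "annihilator F x = {a \<in> vecs_over F. dot a x = 0}"

definition syndrome :: "(nat \<Rightarrow> 'a::comm_ring ^ 'n) \<Rightarrow> nat \<Rightarrow> 'a ^ 'n \<Rightarrow> nat \<Rightarrow> 'a" where
  "syndrome t \<nu> c = (\<lambda>i. if i < \<nu> then dot (t i) c else 0)"

lemma syndrome_in_tuples: "syndrome t \<nu> c \<in> tuples \<nu>"
  by (simp add: syndrome_def tuples_def)

lemma syndrome_eq_0_iff: "syndrome t \<nu> c = 0 \<longleftrightarrow> (\<forall>i<\<nu>. dot (t i) c = 0)"
  by (auto simp: syndrome_def fun_eq_iff)

lemma syndrome_diff: "syndrome t \<nu> (c - c') = syndrome t \<nu> c - syndrome t \<nu> c'"
  by (simp add: syndrome_def fun_eq_iff dot_diff_right)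

lemma syndrome_image_closed:
  assumes C: "vec.subspace C"
  shows "0 \<in> syndrome t \<nu> ` C"
    and "\<And>y z. y \<in> syndrome t \<nu> ` C \<Longrightarrow> z \<in> syndrome t \<nu> ` C \<Longrightarrow> y + z \<in> syndrome t \<nu> ` C"
    and "\<And>a y. y \<in> syndrome t \<nu> ` C \<Longrightarrow> (\<lambda>i. a * y i) \<in> syndrome t \<nu> ` C"
proof -
  have "0 = syndrome t \<nu> 0"
    by (simp add: syndrome_def fun_eq_iff)
  then show "0 \<in> syndrome t \<nu> ` C"
    using vec.subspace_0[OF C] by (rule image_eqI)
  show "y + z \<in> syndrome t \<nu> ` C" if "y \<in> syndrome t \<nu> ` C" "z \<in> syndrome t \<nu> ` C" for y z
  proof -
    from that obtain c c' where "c \<in> C" "c' \<in> C" "y = syndrome t \<nu> c" "z = syndrome t \<nu> c'"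
      by blast
    then have "y + z = syndrome t \<nu> (c + c')"
      by (simp add: syndrome_def fun_eq_iff dot_add_right)
    then show ?thesis
      using vec.subspace_add[OF C \<open>c \<in> C\<close> \<open>c' \<in> C\<close>] by (rule image_eqI)
  qed
  show "(\<lambda>i. a * y i) \<in> syndrome t \<nu> ` C" if "y \<in> syndrome t \<nu> ` C" for a y
  proof -
    from that obtain c where "c \<in> C" "y = syndrome t \<nu> c"
      by blast
    then have "(\<lambda>i. a * y i) = syndrome t \<nu> (a *s c)"
      by (simp add: syndrome_def fun_eq_iff dot_scale_right)
    then show ?thesis
      using vec.subspace_scale[OF C \<open>c \<in> C\<close>] by (rule image_eqI)
  qed
qed

locale finite_subfield = subfield F for F :: "'a::{field,finite} set"
begin

sublocale K: subfield_module "(*) :: 'a \<Rightarrow> 'a \<Rightarrow> 'a" F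
  by unfold_locales (auto simp: algebra_simps)

sublocale V: subfield_module "(*s) :: 'a \<Rightarrow> 'a ^ 'n \<Rightarrow> 'a ^ 'n" F
  by unfold_locales (auto simp: vec_eq_iff algebra_simps)

lemma Fsubspace_vecs_over: "V.Fsubspace (vecs_over F)"
  by (auto simp: V.Fsubspace_def vecs_over_def intro: zero_mem add_mem mult_mem)

lemma Fsubspace_annihilator: "V.Fsubspace (annihilator F x)"
  by (auto simp: V.Fsubspace_def annihilator_def vecs_over_def dot_add_left dot_scale_left
      intro: zero_mem add_mem mult_mem)

lemma Fsubspace_coord_span: "K.Fsubspace (coord_span F x)"
  unfolding K.Fsubspace_def coord_span_def
proof (intro conjI ballI)
  show "0 \<in> (\<lambda>a. dot a x) ` vecs_over F"
    using zero_mem by (intro image_eqI[of _ _ 0]) (auto simp: vecs_over_def)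
  show "y + z \<in> (\<lambda>a. dot a x) ` vecs_over F"
    if "y \<in> (\<lambda>a. dot a x) ` vecs_over F" "z \<in> (\<lambda>a. dot a x) ` vecs_over F" for y z
    using that add_mem by (auto simp: vecs_over_def dot_add_left[symmetric] intro!: image_eqI)
  show "c * y \<in> (\<lambda>a. dot a x) ` vecs_over F"
    if "c \<in> F" "y \<in> (\<lambda>a. dot a x) ` vecs_over F" for c y
    using that mult_mem by (auto simp: vecs_over_def dot_scale_left[symmetric] intro!: image_eqI)
qed

lemma card_vecs_over_eq_mult:
  fixes x :: "'a ^ 'n"
  shows "card (vecs_over F :: ('a ^ 'n) set) = card (coord_span F x) * card (annihilator F x)"
  unfolding coord_span_def annihilator_def
  by (rule card_eq_card_image_mult_card_kernel)
    (auto simp: vecs_over_def dot_diff_left intro: add_mem diff_mem)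

(* Expand each coefficient in an F-basis of 'a; comparing coordinates reduces the claim to the
   F-independence of t. *)
lemma Findependent_imp_independent:
  fixes t :: "nat \<Rightarrow> 'a ^ 'n"
  assumes indep: "V.Findependent t \<nu>" and t: "\<forall>i<\<nu>. t i \<in> vecs_over F"
    and zero: "(\<Sum>i<\<nu>. \<alpha> i *s t i) = 0" and "i < \<nu>"
  shows "\<alpha> i = 0"
proof -
  obtain e r where e: "K.Findependent e r" "K.Fspan e r = UNIV"
    using K.Fbasis_exists[of UNIV] by (auto simp: K.Fsubspace_def)
  have "\<forall>i. \<exists>M. (\<forall>s<r. M s \<in> F) \<and> \<alpha> i = K.lincomb M e r"
    using e(2) unfolding K.Fspan_def by blast
  then obtain M where M: "\<And>i s. s < r \<Longrightarrow> M i s \<in> F" "\<And>i. \<alpha> i = K.lincomb (M i) e r"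
    by metis
  have "V.lincomb (\<lambda>i. M i s) t \<nu> = 0" if "s < r" for s
  proof (rule vec_eq_iff[THEN iffD2], rule allI)
    fix l
    define d where "d s = (\<Sum>i<\<nu>. M i s * t i $ l)" for s
    have "K.lincomb d e r = (\<Sum>i<\<nu>. \<alpha> i * t i $ l)"
      unfolding d_def M(2) K.lincomb_def
      by (simp add: sum_distrib_left sum_distrib_right mult_ac sum.swap[of _ "{..<r}"])
    also have "\<dots> = 0"
      using arg_cong[OF zero, of "\<lambda>v. v $ l"] by (simp add: sum_component)
    finally have "K.lincomb d e r = 0" .
    moreover have "\<forall>s<r. d s \<in> F"
      using t M(1) by (auto simp: d_def vecs_over_def intro!: sum_mem mult_mem)
    ultimately have "d s = 0"
      using K.FindependentD[OF e(1) _ _ that] by blast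
    then show "V.lincomb (\<lambda>i. M i s) t \<nu> $ l = 0 $ l"
      by (simp add: V.lincomb_def sum_component d_def)
  qed
  then have "M i s = 0" if "s < r" for s
    using V.FindependentD[OF indep _ _ \<open>i < \<nu>\<close>, of "\<lambda>i. M i s"] M(1) that by simp
  then show ?thesis
    by (simp add: M(2) K.lincomb_def)
qed

end

section \<open>The subfield GF(q) and the rank\<close>

locale ground_field = finite_subfield F for F :: "'a::{field,finite} set" +
  fixes q :: nat
  assumes subfield_q_eq: "subfield_q q = F" and card_F: "card F = q"
begin

lemma two_le_q: "2 \<le> q"
  using two_le_card card_F by simp

lemma rk_eq_Least_Fspan: "rk q x = (LEAST r. \<exists>b. \<forall>l. x $ l \<in> K.Fspan b r)"
proof -
  have "(\<exists>c. (\<forall>j. c j \<in> F) \<and> y = (\<Sum>j<r. c j * b j)) \<longleftrightarrow> y \<in> K.Fspan b r" for y b r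
  proof
    assume "y \<in> K.Fspan b r"
    then obtain c where "\<forall>j<r. c j \<in> F" "y = (\<Sum>j<r. c j * b j)"
      by (auto simp: K.Fspan_def K.lincomb_def)
    then show "\<exists>c. (\<forall>j. c j \<in> F) \<and> y = (\<Sum>j<r. c j * b j)"
      using zero_mem by (intro exI[of _ "\<lambda>j. if j < r then c j else 0"]) auto
  qed (auto simp: K.Fspan_def K.lincomb_def)
  then show ?thesis
    by (simp add: rk_def subfield_q_eq)
qed

lemma card_coord_span:
  fixes x :: "'a ^ 'n"
  shows "card (coord_span F x) = q ^ rk q x"
proof -
  obtain t r where t: "K.Findependent t r" "K.Fspan t r = coord_span F x"
    using K.Fbasis_exists[OF Fsubspace_coord_span finite] by metis
  then have card_r: "card (coord_span F x) = q ^ r"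
    using K.card_Fspan card_F by metis
  have "x $ l \<in> coord_span F x" for l
    using zero_mem one_mem dot_axis_left[of l x]
    by (auto simp: coord_span_def vecs_over_def axis_def intro!: image_eqI[of _ _ "axis l 1"])
  then have "\<exists>b. \<forall>l. x $ l \<in> K.Fspan b r"
    using t(2) by blast
  then have "rk q x \<le> r"
    unfolding rk_eq_Least_Fspan by (rule Least_le)
  obtain b where b: "\<forall>l. x $ l \<in> K.Fspan b (rk q x)"
    using LeastI_ex[of "\<lambda>r. \<exists>b. \<forall>l. x $ l \<in> K.Fspan b r"] \<open>\<exists>b. \<forall>l. x $ l \<in> K.Fspan b r\<close>
    unfolding rk_eq_Least_Fspan by blast
  have "coord_span F x \<subseteq> K.Fspan b (rk q x)"
  proof
    fix y assume "y \<in> coord_span F x"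
    then obtain a where "a \<in> vecs_over F" "y = (\<Sum>l\<in>UNIV. a $ l * x $ l)"
      by (auto simp: coord_span_def dot_def)
    then show "y \<in> K.Fspan b (rk q x)"
      using b K.Fsubspace_Fspan
      by (auto simp: vecs_over_def K.Fsubspace_def intro!: K.Fsubspace_sum)
  qed
  then have "q ^ r \<le> q ^ rk q x"
    using card_mono[OF K.finite_Fspan] K.card_Fspan_le card_r card_F by (metis le_trans)
  then have "r \<le> rk q x"
    using two_le_q by simp
  with \<open>rk q x \<le> r\<close> card_r show ?thesis
    by simp
qed

lemma card_vecs_over_q: "card (vecs_over F :: ('a ^ 'n) set) = q ^ CARD('n)"
  using card_vecs_over[of F] card_F by simp

lemma rk_le_CARD: "rk q (x :: 'a ^ 'n) \<le> CARD('n)"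
proof -
  have "q ^ rk q x \<le> card (vecs_over F :: ('a ^ 'n) set)"
    unfolding card_coord_span[symmetric] coord_span_def by (rule card_image_le) simp
  then show ?thesis
    using two_le_q card_vecs_over_q[where 'n='n] by simp
qed

lemma card_annihilator: "card (annihilator F (x :: 'a ^ 'n)) = q ^ (CARD('n) - rk q x)"
proof -
  have "q ^ rk q x * q ^ (CARD('n) - rk q x) = q ^ rk q x * card (annihilator F x)"
    using card_vecs_over_eq_mult[of x] card_vecs_over_q[where 'n='n] card_coord_span[of x] rk_le_CARD[of x]
    by (simp flip: power_add)
  then show ?thesis
    using two_le_q by simp
qed

lemma rk_sum_scale_le:
  assumes "\<forall>i<\<nu>. t i \<in> vecs_over F"
  shows "rk q (\<Sum>i<\<nu>. \<alpha> i *s t i) \<le> \<nu>"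
  unfolding rk_eq_Least_Fspan
proof (rule Least_le, rule exI[of _ \<alpha>], rule allI)
  fix l
  have "(\<Sum>i<\<nu>. \<alpha> i *s t i) $ l = K.lincomb (\<lambda>i. t i $ l) \<alpha> \<nu>"
    by (simp add: sum_component K.lincomb_def mult.commute)
  then show "(\<Sum>i<\<nu>. \<alpha> i *s t i) $ l \<in> K.Fspan \<alpha> \<nu>"
    using assms by (auto simp: vecs_over_def intro: K.mem_FspanI)
qed

section \<open>The double counting\<close>

(* A nonzero functional vanishing on the image would give the nonzero dual codeword
   sum of alpha i *s t i, whose rank is at most nu. *)
lemma syndrome_surjective:
  fixes C :: "('a ^ 'n) set" and t :: "nat \<Rightarrow> 'a ^ 'n"
  assumes C: "vec.subspace C" and dual: "\<forall>u\<in>dual_code C. u \<noteq> 0 \<longrightarrow> \<nu> < rk q u"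
    and t: "t \<in> V.independent_tuples (vecs_over F) \<nu>"
  shows "syndrome t \<nu> ` C = tuples \<nu>"
proof (rule ccontr)
  assume "syndrome t \<nu> ` C \<noteq> tuples \<nu>"
  moreover have "syndrome t \<nu> ` C \<subseteq> tuples \<nu>"
    using syndrome_in_tuples by blast
  ultimately obtain \<alpha> where \<alpha>: "\<alpha> \<in> tuples \<nu>" "\<alpha> \<noteq> 0"
    and annihilates: "\<And>y. y \<in> syndrome t \<nu> ` C \<Longrightarrow> (\<Sum>i<\<nu>. \<alpha> i * y i) = 0"
    using exists_annihilator_of_proper_subspace[OF _ _ syndrome_image_closed[OF C]] by blast
  define u where "u = (\<Sum>i<\<nu>. \<alpha> i *s t i)"
  have t': "V.Findependent t \<nu>" "\<forall>i<\<nu>. t i \<in> vecs_over F"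
    using t by (auto simp: V.independent_tuples_def)
  have "dot u c = (\<Sum>i<\<nu>. \<alpha> i * syndrome t \<nu> c i)" for c
    by (simp add: u_def dot_sum_left dot_scale_left syndrome_def)
  then have "u \<in> dual_code C"
    using annihilates by (simp add: dual_code_def dot_def)
  moreover have "u \<noteq> 0"
  proof
    assume "u = 0"
    then have "\<alpha> i = 0" if "i < \<nu>" for i
      using Findependent_imp_independent[OF t'] that by (simp add: u_def)
    with \<alpha> show False
      by (auto simp: tuples_def fun_eq_iff not_less[symmetric])
  qed
  ultimately have "\<nu> < rk q u"
    using dual by blast
  with rk_sum_scale_le[OF t'(2), of \<alpha>] show False
    by (simp add: u_def)
qed

lemma card_annihilated_codewords:
  fixes C :: "('a ^ 'n) set" and t :: "nat \<Rightarrow> 'a ^ 'n"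
  assumes C: "vec.subspace C" and dual: "\<forall>u\<in>dual_code C. u \<noteq> 0 \<longrightarrow> \<nu> < rk q u"
    and t: "t \<in> V.independent_tuples (vecs_over F) \<nu>"
  shows "CARD('a) ^ \<nu> * card {c \<in> C. \<forall>i<\<nu>. dot (t i) c = 0} = CARD('a) ^ vec.dim C"
proof -
  have "card C = card (syndrome t \<nu> ` C) * card {c \<in> C. syndrome t \<nu> c = 0}"
    using vec.subspace_add[OF C] vec.subspace_diff[OF C]
    by (intro card_eq_card_image_mult_card_kernel) (auto simp: syndrome_diff)
  then show ?thesis
    using syndrome_surjective[OF C dual t] card_tuples[where 'a='a] vec.card_subspace[OF _ C]
    by (simp add: syndrome_eq_0_iff)
qed

lemma sum_card_independent_tuples_annihilator:
  fixes C :: "('a ^ 'n) set"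
  assumes C: "vec.subspace C" and dual: "\<forall>u\<in>dual_code C. u \<noteq> 0 \<longrightarrow> \<nu> < rk q u"
  shows "(\<Sum>c\<in>C. card (V.independent_tuples (annihilator F c) \<nu>)) * CARD('a) ^ \<nu>
    = card (V.independent_tuples (vecs_over F :: ('a ^ 'n) set) \<nu>) * CARD('a) ^ vec.dim C"
proof -
  let ?T = "V.independent_tuples (vecs_over F :: ('a ^ 'n) set) \<nu>"
  let ?D = "\<lambda>t. {c \<in> C. \<forall>i<\<nu>. dot (t i) c = 0}"
  have mem: "t \<in> V.independent_tuples (annihilator F c) \<nu> \<longleftrightarrow> t \<in> ?T \<and> (\<forall>i<\<nu>. dot (t i) c = 0)" for c t
    by (auto simp: V.independent_tuples_def annihilator_def PiE_iff)
  have swap: "(SIGMA c:C. V.independent_tuples (annihilator F c) \<nu>) = prod.swap ` (SIGMA t:?T. ?D t)"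
    by (auto simp: mem image_iff)
  have "(\<Sum>c\<in>C. card (V.independent_tuples (annihilator F c) \<nu>))
      = card (SIGMA c:C. V.independent_tuples (annihilator F c) \<nu>)"
    by (rule card_SigmaI[symmetric]) (simp_all add: V.finite_independent_tuples)
  also have "\<dots> = card (SIGMA t:?T. ?D t)"
    unfolding swap by (rule card_image) (simp add: swap_inj_on)
  also have "\<dots> = (\<Sum>t\<in>?T. card (?D t))"
    by (rule card_SigmaI) (simp_all add: V.finite_independent_tuples)
  also have "\<dots> * CARD('a) ^ \<nu> = (\<Sum>t\<in>?T. CARD('a) ^ vec.dim C)"
    unfolding sum_distrib_right using card_annihilated_codewords[OF C dual]
    by (intro sum.cong) (auto simp: mult.commute)
  finally show ?thesis
    by simp
qed

lemma sum_gauss_binom_rank: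
  fixes C :: "('a ^ 'n) set"
  assumes C: "vec.subspace C" and dual: "\<forall>u\<in>dual_code C. u \<noteq> 0 \<longrightarrow> \<nu> < rk q u"
  shows "(\<Sum>c\<in>C. gauss_binom q (CARD('n) - rk q c) \<nu>) * real CARD('a) ^ \<nu>
    = gauss_binom q CARD('n) \<nu> * real CARD('a) ^ vec.dim C"
proof -
  let ?T = "V.independent_tuples :: ('a ^ 'n) set \<Rightarrow> _"
  let ?den = "\<Prod>i<\<nu>. real q ^ \<nu> - real q ^ i"
  have "gauss_binom (card F) CARD('n) \<nu>
      = real (card (?T (vecs_over F) \<nu>)) / (\<Prod>i<\<nu>. real (card F) ^ \<nu> - real (card F) ^ i)"
    by (rule V.gauss_binom_eq_card_independent_tuples[OF Fsubspace_vecs_over finite])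
      (simp add: card_vecs_over_q card_F)
  then have gauss_n: "gauss_binom q CARD('n) \<nu> = real (card (?T (vecs_over F) \<nu>)) / ?den"
    by (simp add: card_F)
  have "gauss_binom q (CARD('n) - rk q c) \<nu> = real (card (?T (annihilator F c) \<nu>)) / ?den" for c
    using V.gauss_binom_eq_card_independent_tuples[OF Fsubspace_annihilator finite]
      card_annihilator[of c] card_F by simp
  then have "(\<Sum>c\<in>C. gauss_binom q (CARD('n) - rk q c) \<nu>) * real CARD('a) ^ \<nu>
      = real ((\<Sum>c\<in>C. card (?T (annihilator F c) \<nu>)) * CARD('a) ^ \<nu>) / ?den"
    by (simp add: sum_divide_distrib[symmetric])
  also have "\<dots> = gauss_binom q CARD('n) \<nu> * real CARD('a) ^ vec.dim C"
    unfolding sum_card_independent_tuples_annihilator[OF C dual] gauss_n by simp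
  finally show ?thesis .
qed

end

lemma ground_field_subfield_q:
  assumes "prime p" and "q = p ^ e" and "CARD('a::{field,finite}) = q ^ m"
  shows "ground_field (subfield_q q :: 'a set) q"
proof -
  have "CHAR('a) = p"
    using CHAR_eq_if_CARD_eq_prime_power[OF assms(1), of "e * m"] assms(2,3) by (simp add: power_mult)
  then have "subfield (subfield_q q :: 'a set)" and "card (subfield_q q :: 'a set) = q"
    using subfield_subfield_q[where 'a='a, of q e] card_subfield_q[where 'a='a, of q e m] assms by simp_all
  then show ?thesis
    by (simp add: ground_field_def ground_field_axioms_def finite_subfield_def)
qed

lemma gauss_binom_eq_0: "a < u \<Longrightarrow> gauss_binom q a u = 0"
  unfolding gauss_binom_def by (rule prod_zero) auto

lemma sum_rank_weight_count:
  fixes C :: "('a::{field,finite} ^ 'n) set"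
  assumes "\<forall>c\<in>C. rk q c \<le> N"
  shows "(\<Sum>i = 0..N. f i * real (rank_weight_count q C i)) = (\<Sum>c\<in>C. f (rk q c))"
proof -
  have "(\<Sum>i = 0..N. f i * real (rank_weight_count q C i))
      = (\<Sum>i = 0..N. \<Sum>c\<in>{c\<in>C. rk q c = i}. f (rk q c))"
    by (intro sum.cong) (simp_all add: rank_weight_count_def)
  also have "\<dots> = (\<Sum>c\<in>C. f (rk q c))"
    by (rule sum.group) (use assms in auto)
  finally show ?thesis .
qed

theorem corollary3:
  fixes C :: "('a::{field,finite} ^ 'n) set"
    and q m k \<nu> :: nat
  assumes q_pp: "\<exists>p e. prime p \<and> e > 0 \<and> q = p ^ e"
    and card_field: "CARD('a) = q ^ m"
    and lin: "vec.subspace C"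
    and dimC: "vec.dim C = k"
    and nu_le: "\<nu> \<le> CARD('n)"
    and nu_lt_dual: "\<forall>x\<in>dual_code C. \<forall>y\<in>dual_code C. x \<noteq> y \<longrightarrow> \<nu> < rk q (x - y)"
  shows "(\<Sum>i = 0..CARD('n) - \<nu>.
            gauss_binom q (CARD('n) - i) \<nu> * real (rank_weight_count q C i))
         = real q powi (int m * (int k - int \<nu>)) * gauss_binom q (CARD('n)) \<nu>"
proof -
  obtain p e where "prime p" "q = p ^ e"
    using q_pp by blast
  then interpret ground_field "subfield_q q :: 'a set" q
    using card_field by (rule ground_field_subfield_q)
  have "0 \<in> dual_code C"
    by (simp add: dual_code_def)
  then have dual: "\<forall>u\<in>dual_code C. u \<noteq> 0 \<longrightarrow> \<nu> < rk q u"
    using nu_lt_dual by fastforce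
  have powi: "real q powi (int m * (int k - int \<nu>)) = real q ^ (m * k) / real q ^ (m * \<nu>)"
    using two_le_q by (simp add: right_diff_distrib power_int_diff flip: of_nat_mult)
  have "(\<Sum>i = 0..CARD('n) - \<nu>. gauss_binom q (CARD('n) - i) \<nu> * real (rank_weight_count q C i))
      = (\<Sum>i = 0..CARD('n). gauss_binom q (CARD('n) - i) \<nu> * real (rank_weight_count q C i))"
    by (rule sum.mono_neutral_left) (auto simp: gauss_binom_eq_0)
  also have "\<dots> = (\<Sum>c\<in>C. gauss_binom q (CARD('n) - rk q c) \<nu>)"
    using rk_le_CARD by (intro sum_rank_weight_count) blast
  also have "\<dots> = gauss_binom q CARD('n) \<nu> * real CARD('a) ^ k / real CARD('a) ^ \<nu>"
    using sum_gauss_binom_rank[OF lin dual] dimC two_le_CARD[where 'a='a]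
    by (simp add: field_simps)
  also have "\<dots> = real q powi (int m * (int k - int \<nu>)) * gauss_binom q CARD('n) \<nu>"
    by (simp add: powi card_field power_mult)
  finally show ?thesis .
qed

end
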